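(* For any nonnegative integers $j_1,j_2,l,k$ with $j_1+j_2-k\ge 1$, there is a constant $C$ (independent of $b$) such that for all $b\in H^{j_1+j_2-k-\frac12}(\mathbb{T})$, $$\|b^{\sharp}\|_{L^2(\Omega)}+ \|\rho^{k+l}\, \partial_\theta^{j_1} \partial^{j_2+l}_{R}\, b^{\sharp}\|_{L^2(\Omega)} \leq C \|b\|_{H^{j_1+j_2-k-\frac12}(\mathbb{T})}.$$ The function $B^\flat$ satisfies the analogous estimate (with $b^\sharp,b$ replaced by $B^\flat,B$).
   Context: $\mathbb{T}:=\mathbb{R}/2\pi\mathbb{Z}$. $\Omega:=\{(R,\theta)\in(1,7)\times\mathbb{T}\}$; the $L^2(\Omega)$ norm is taken with the measure $dR\,d\theta$. $\rho(R):=\frac16(R-1)(7-R)$. Fix an even cutoff $\widetilde\chi\in C^\infty(\mathbb{R})$ with $\widetilde\chi(s)=1$ if $|s|<\frac12$ and $\widetilde\chi(s)=0$ if $|s|>1$. For functions $b,B$ on $\mathbb{T}$ with Fourier coefficients $b_n,B_n$ (i.e. $b_n=\frac1{2\pi}\int_0^{2\pi}b(\theta)e^{-in\theta}d\theta$, similarly $B_n$), define $b^\sharp(R,\theta):=\sum_{n\in\mathbb{Z}} b_n e^{in\theta}\widetilde\chi((1+|n|)(R-1))$ and $B^\flat(R,\theta):=\sum_{n\in\mathbb{Z}} B_n e^{in\theta}\widetilde\chi((1+|n|)(R-7))$. *)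

theory Defs
  imports "HOL-Analysis.Analysis"
begin

definition fcoeff :: "(real \<Rightarrow> complex) \<Rightarrow> int \<Rightarrow> complex" where
  "fcoeff b n = (LINT \<theta>:{0..2*pi}|lborel. exp (- (\<i> * of_int n * of_real \<theta>)) * b \<theta>) / (2 * pi)"

definition in_Hs :: "real \<Rightarrow> (real \<Rightarrow> complex) \<Rightarrow> bool" where
  "in_Hs s b \<longleftrightarrow> b \<in> borel_measurable borel \<and>
     (\<integral>\<^sup>+ \<theta>\<in>{0..2*pi}. ennreal ((cmod (b \<theta>))\<^sup>2) \<partial>lborel) < \<infinity> \<and>
     (\<lambda>n::int. (1 + (real_of_int n)\<^sup>2) powr s * (cmod (fcoeff b n))\<^sup>2) summable_on UNIV"

definition Hs_norm :: "real \<Rightarrow> (real \<Rightarrow> complex) \<Rightarrow> real" where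
  "Hs_norm s b = sqrt (\<Sum>\<^sub>\<infinity>n::int. (1 + (real_of_int n)\<^sup>2) powr s * (cmod (fcoeff b n))\<^sup>2)"

definition rho :: "real \<Rightarrow> real" where
  "rho R = (1/6) * (R - 1) * (7 - R)"

definition bsharp :: "(real \<Rightarrow> real) \<Rightarrow> (real \<Rightarrow> complex) \<Rightarrow> real \<times> real \<Rightarrow> complex" where
  "bsharp chi b = (\<lambda>(R, \<theta>). \<Sum>\<^sub>\<infinity>n::int. fcoeff b n * exp (\<i> * of_int n * of_real \<theta>)
      * of_real (chi ((1 + \<bar>real_of_int n\<bar>) * (R - 1))))"

definition Bflat :: "(real \<Rightarrow> real) \<Rightarrow> (real \<Rightarrow> complex) \<Rightarrow> real \<times> real \<Rightarrow> complex" where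
  "Bflat chi B = (\<lambda>(R, \<theta>). \<Sum>\<^sub>\<infinity>n::int. fcoeff B n * exp (\<i> * of_int n * of_real \<theta>)
      * of_real (chi ((1 + \<bar>real_of_int n\<bar>) * (R - 7))))"

definition dR :: "(real \<times> real \<Rightarrow> complex) \<Rightarrow> real \<times> real \<Rightarrow> complex" where
  "dR f = (\<lambda>(R, \<theta>). vector_derivative (\<lambda>r. f (r, \<theta>)) (at R))"

definition dTheta :: "(real \<times> real \<Rightarrow> complex) \<Rightarrow> real \<times> real \<Rightarrow> complex" where
  "dTheta f = (\<lambda>(R, \<theta>). vector_derivative (\<lambda>t. f (R, t)) (at \<theta>))"

definition Omega :: "(real \<times> real) set" where
  "Omega = {1<..<7} \<times> {0..<2*pi}"

definition L2norm :: "(real \<times> real \<Rightarrow> complex) \<Rightarrow> ennreal" where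
  "L2norm f = (let I = (\<integral>\<^sup>+ x\<in>Omega. ennreal ((cmod (f x))\<^sup>2) \<partial>lborel)
               in if I = \<infinity> then \<infinity> else ennreal (sqrt (enn2real I)))"

end

(*
  Away from the boundary circle R = c (c = 1 for b-sharp, c = 7 for B-flat) the cutoff
  chi((1 + |n|)(R - c)) kills every mode with |n| > 1/|R - c|, so on Omega the series is
  locally a trigonometric polynomial and may be differentiated termwise: each d/dR produces
  a factor (1 + |n|) and a derivative of chi, each d/dtheta a factor i n. By Parseval on
  every circle and Tonelli, the squared L^2(Omega) norm is 2 pi times the sum over n of
  |b_n|^2 |n|^(2 j1) times the integral of rho^(2 p) (1 + |n|)^(2 m) |chi^(m)|^2 over R.
  That integrand lives on |R - c| <= 1/(1 + |n|), where rho R <= |R - c|, so the integral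
  is at most 2 M^2 (1 + |n|)^(2 m - 2 p - 1), and the mode weight is bounded by
  2^s (1 + n^2)^s with s = j1 + j2 - k - 1/2.
*)
theory Submission
  imports Defs
begin

lemma deriv_iterate_eq_0_on_open:
  fixes f :: "real \<Rightarrow> real"
  assumes "open U" and "\<And>s. s \<in> U \<Longrightarrow> f s = 0" and "s \<in> U"
  shows "(deriv ^^ m) f s = 0"
  using \<open>s \<in> U\<close>
proof (induction m arbitrary: s)
  case 0
  then show ?case using assms(2) by simp
next
  case (Suc m)
  have "((deriv ^^ m) f has_field_derivative 0) (at s)"
    by (rule has_field_derivative_transform_within_open[of "\<lambda>_. 0" 0 s U])
       (use Suc assms(1) in auto)
  then show ?case by (simp add: DERIV_imp_deriv)
qed

lemma deriv_iterate_eq_0_outside_interval: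
  fixes f :: "real \<Rightarrow> real"
  assumes "\<And>s. \<bar>s\<bar> > 1 \<Longrightarrow> f s = 0" and "\<bar>s\<bar> > 1"
  shows "(deriv ^^ m) f s = 0"
proof (rule deriv_iterate_eq_0_on_open[of "{s. \<bar>s\<bar> > 1}"])
  show "open {s::real. \<bar>s\<bar> > 1}" by (intro open_Collect_less continuous_intros)
qed (use assms in auto)

lemma bounded_vanishing_outside_interval:
  fixes g :: "real \<Rightarrow> real"
  assumes "continuous_on UNIV g" and "\<And>s. \<bar>s\<bar> > 1 \<Longrightarrow> g s = 0"
  obtains M where "\<And>s. \<bar>g s\<bar> \<le> M"
proof -
  have "compact (g ` {-1..1})"
    by (rule compact_continuous_image) (use assms(1) continuous_on_subset in auto)
  then obtain M where M: "\<And>y. y \<in> g ` {-1..1} \<Longrightarrow> \<bar>y\<bar> \<le> M"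
    by (metis compact_imp_bounded bounded_real)
  have "\<bar>g s\<bar> \<le> M" for s
  proof (cases "\<bar>s\<bar> > 1")
    case True
    then show ?thesis using M[of "g 0"] assms(2)[of s] by simp
  next
    case False
    then have "s \<in> {-1..1}" by auto
    then show ?thesis using M by blast
  qed
  then show thesis by (rule that)
qed

definition trig_series ::
    "(int \<Rightarrow> complex) \<Rightarrow> (int \<Rightarrow> real \<Rightarrow> real) \<Rightarrow> real \<times> real \<Rightarrow> complex" where
  "trig_series a \<phi> =
     (\<lambda>(R, \<theta>). \<Sum>\<^sub>\<infinity>n. a n * exp (\<i> * of_int n * of_real \<theta>) * of_real (\<phi> n R))"

(* The R-profile of the n-th mode of b-sharp (c = 1) or B-flat (c = 7) after m derivatives in R. *)
definition cutoff_profile :: "(real \<Rightarrow> real) \<Rightarrow> real \<Rightarrow> nat \<Rightarrow> int \<Rightarrow> real \<Rightarrow> real" where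
  "cutoff_profile chi c m n R =
     (1 + \<bar>real_of_int n\<bar>) ^ m * (deriv ^^ m) chi ((1 + \<bar>real_of_int n\<bar>) * (R - c))"

lemma bsharp_eq_trig_series: "bsharp chi b = trig_series (fcoeff b) (cutoff_profile chi 1 0)"
  by (simp add: bsharp_def trig_series_def cutoff_profile_def)

lemma Bflat_eq_trig_series: "Bflat chi B = trig_series (fcoeff B) (cutoff_profile chi 7 0)"
  by (simp add: Bflat_def trig_series_def cutoff_profile_def)

lemma trig_series_eq_sum:
  assumes "finite S" and "\<And>n. n \<notin> S \<Longrightarrow> \<phi> n R = 0"
  shows "trig_series a \<phi> (R, \<theta>) = (\<Sum>n\<in>S. a n * exp (\<i> * of_int n * of_real \<theta>) * of_real (\<phi> n R))"
proof -
  have "trig_series a \<phi> (R, \<theta>) = (\<Sum>\<^sub>\<infinity>n\<in>S. a n * exp (\<i> * of_int n * of_real \<theta>) * of_real (\<phi> n R))"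
    unfolding trig_series_def by (simp, rule infsum_cong_neutral) (use assms(2) in auto)
  then show ?thesis using assms(1) by simp
qed

lemma trig_series_mult_of_real:
  "of_real (g R) * trig_series a \<phi> (R, \<theta>) = trig_series a (\<lambda>n r. g r * \<phi> n r) (R, \<theta>)"
  by (simp add: trig_series_def flip: infsum_cmult_right') (simp add: ac_simps)

lemma cutoff_profile_eq_0:
  assumes "\<And>s. \<bar>s\<bar> > 1 \<Longrightarrow> chi s = 0" and "1 < (1 + \<bar>real_of_int n\<bar>) * \<bar>R - c\<bar>"
  shows "cutoff_profile chi c m n R = 0"
  using deriv_iterate_eq_0_outside_interval[OF assms(1)] assms(2)
  by (simp add: cutoff_profile_def abs_mult)

lemma cutoff_profile_support:
  assumes "\<And>s. \<bar>s\<bar> > 1 \<Longrightarrow> chi s = 0" and "0 < d" and "d \<le> \<bar>R - c\<bar>"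
  shows "{n. cutoff_profile chi c m n R \<noteq> 0} \<subseteq> {-\<lceil>1/d\<rceil>..\<lceil>1/d\<rceil>}"
proof
  fix n assume "n \<in> {n. cutoff_profile chi c m n R \<noteq> 0}"
  then have "\<not> 1 < (1 + \<bar>real_of_int n\<bar>) * \<bar>R - c\<bar>"
    using cutoff_profile_eq_0[of chi n R c m, OF assms(1)] by auto
  then have "\<bar>real_of_int n\<bar> * d < 1"
    using assms(2,3) mult_left_mono[OF assms(3), of "1 + \<bar>real_of_int n\<bar>"] by (simp add: algebra_simps)
  then have "\<bar>real_of_int n\<bar> \<le> 1/d" using assms(2) by (simp add: field_simps)
  then have "\<bar>n\<bar> \<le> \<lceil>1/d\<rceil>" by linarith
  then show "n \<in> {-\<lceil>1/d\<rceil>..\<lceil>1/d\<rceil>}" by auto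
qed

lemma cutoff_profile_has_real_derivative:
  assumes "\<And>m x. (deriv ^^ m) chi differentiable (at x)"
  shows "(cutoff_profile chi c m n has_real_derivative cutoff_profile chi c (Suc m) n R) (at R)"
proof -
  define K where "K = 1 + \<bar>real_of_int n\<bar>"
  have "((deriv ^^ m) chi has_real_derivative (deriv ^^ Suc m) chi (K * (R - c))) (at (K * (R - c)))"
    using assms by (simp add: DERIV_deriv_iff_real_differentiable)
  moreover have "((\<lambda>r. K * (r - c)) has_real_derivative K) (at R)"
    by (auto intro!: derivative_eq_intros)
  ultimately have "((\<lambda>r. (deriv ^^ m) chi (K * (r - c))) has_real_derivative
      (deriv ^^ Suc m) chi (K * (R - c)) * K) (at R)"
    by (rule DERIV_chain2)
  then show ?thesis
    unfolding cutoff_profile_def K_def[symmetric]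
    by (auto intro!: derivative_eq_intros simp: algebra_simps)
qed

lemma finite_cutoff_profile_support:
  assumes "\<And>s. \<bar>s\<bar> > 1 \<Longrightarrow> chi s = 0" and "R \<noteq> c"
  shows "finite {n. cutoff_profile chi c m n R \<noteq> 0}"
  using cutoff_profile_support[of chi "\<bar>R - c\<bar>" R c m, OF assms(1)] assms(2)
  by (auto intro: finite_subset)

lemma borel_measurable_cutoff_profile:
  assumes "\<And>m x. (deriv ^^ m) chi differentiable (at x)"
  shows "cutoff_profile chi c m n \<in> borel_measurable borel"
  using cutoff_profile_has_real_derivative[OF assms]
  by (intro borel_measurable_continuous_onI) (meson DERIV_isCont continuous_at_imp_continuous_on)

lemma trig_series_has_vector_derivative_R:
  assumes "open U" and "R \<in> U" and "finite S"
    and "\<And>n r. r \<in> U \<Longrightarrow> n \<notin> S \<Longrightarrow> \<phi> n r = 0" and "\<And>n. n \<notin> S \<Longrightarrow> \<psi> n R = 0"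
    and "\<And>n. (\<phi> n has_real_derivative \<psi> n R) (at R)"
  shows "((\<lambda>r. trig_series a \<phi> (r, \<theta>)) has_vector_derivative trig_series a \<psi> (R, \<theta>)) (at R)"
proof -
  have "((\<lambda>r. \<Sum>n\<in>S. a n * exp (\<i> * of_int n * of_real \<theta>) * of_real (\<phi> n r)) has_vector_derivative
      (\<Sum>n\<in>S. a n * exp (\<i> * of_int n * of_real \<theta>) * of_real (\<psi> n R))) (at R)"
    by (intro has_vector_derivative_sum has_vector_derivative_mult_right
        has_vector_derivative_of_real assms(6))
  then have "((\<lambda>r. \<Sum>n\<in>S. a n * exp (\<i> * of_int n * of_real \<theta>) * of_real (\<phi> n r)) has_vector_derivative
      trig_series a \<psi> (R, \<theta>)) (at R)"
    by (simp add: trig_series_eq_sum[of S \<psi> R, OF assms(3,5)])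
  then show ?thesis
    by (rule has_vector_derivative_transform_within_open[OF _ assms(1,2)])
       (simp add: trig_series_eq_sum[of S \<phi>, OF assms(3,4)])
qed

lemma trig_series_has_vector_derivative_theta:
  assumes "finite {n. \<phi> n R \<noteq> 0}"
  shows "((\<lambda>t. trig_series a \<phi> (R, t)) has_vector_derivative
           trig_series (\<lambda>n. \<i> * of_int n * a n) \<phi> (R, \<theta>)) (at \<theta>)"
proof -
  let ?S = "{n. \<phi> n R \<noteq> 0}"
  have exp: "((\<lambda>t. exp (\<i> * of_int n * of_real t)) has_vector_derivative
      \<i> * of_int n * exp (\<i> * of_int n * of_real \<theta>)) (at \<theta>)" for n
  proof -
    have "((\<lambda>z. exp (\<i> * of_int n * z)) has_field_derivative
        exp (\<i> * of_int n * of_real \<theta>) * (\<i> * of_int n)) (at (of_real \<theta>))"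
      by (auto intro!: derivative_eq_intros)
    from has_vector_derivative_real_field[OF this] show ?thesis by (simp add: mult.commute)
  qed
  have "((\<lambda>t. \<Sum>n\<in>?S. a n * exp (\<i> * of_int n * of_real t) * of_real (\<phi> n R)) has_vector_derivative
      (\<Sum>n\<in>?S. (\<i> * of_int n * a n) * exp (\<i> * of_int n * of_real \<theta>) * of_real (\<phi> n R))) (at \<theta>)"
  proof (rule has_vector_derivative_sum)
    fix n
    show "((\<lambda>t. a n * exp (\<i> * of_int n * of_real t) * of_real (\<phi> n R)) has_vector_derivative
        (\<i> * of_int n * a n) * exp (\<i> * of_int n * of_real \<theta>) * of_real (\<phi> n R)) (at \<theta>)"
      using has_vector_derivative_mult_left[OF has_vector_derivative_mult_right[OF exp, where a="a n"],
          where a="of_real (\<phi> n R)"]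
      by (simp add: ac_simps)
  qed
  moreover have "trig_series b \<phi> (R, t) =
      (\<Sum>n\<in>?S. b n * exp (\<i> * of_int n * of_real t) * of_real (\<phi> n R))" for b t
    by (rule trig_series_eq_sum[OF assms]) simp
  ultimately show ?thesis by simp
qed

lemma dR_iterate_cutoff_series:
  assumes smooth: "\<And>m x. (deriv ^^ m) chi differentiable (at x)"
    and zero: "\<And>s. \<bar>s\<bar> > 1 \<Longrightarrow> chi s = 0" and "R \<noteq> c"
  shows "(dR ^^ m) (trig_series a (cutoff_profile chi c 0)) (R, \<theta>) =
         trig_series a (cutoff_profile chi c m) (R, \<theta>)"
  using \<open>R \<noteq> c\<close>
proof (induction m arbitrary: R)
  case 0
  then show ?case by simp
next
  case (Suc m)
  define d where "d = \<bar>R - c\<bar> / 2"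
  have d: "0 < d" using Suc.prems by (simp add: d_def)
  have U: "open {r. d < \<bar>r - c\<bar>}" "R \<in> {r. d < \<bar>r - c\<bar>}"
    using d by (auto intro!: open_Collect_less continuous_intros simp: d_def)
  have supp: "cutoff_profile chi c i n r = 0"
    if "r \<in> {r. d < \<bar>r - c\<bar>}" "n \<notin> {-\<lceil>1/d\<rceil>..\<lceil>1/d\<rceil>}" for i n r
    using cutoff_profile_support[of chi d r c i, OF zero d] that by auto
  have "((\<lambda>r. trig_series a (cutoff_profile chi c m) (r, \<theta>)) has_vector_derivative
      trig_series a (cutoff_profile chi c (Suc m)) (R, \<theta>)) (at R)"
    by (rule trig_series_has_vector_derivative_R[OF U finite_atLeastAtMost_int supp supp])
       (use U cutoff_profile_has_real_derivative[OF smooth] in auto)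
  then have "((\<lambda>r. (dR ^^ m) (trig_series a (cutoff_profile chi c 0)) (r, \<theta>)) has_vector_derivative
      trig_series a (cutoff_profile chi c (Suc m)) (R, \<theta>)) (at R)"
    by (rule has_vector_derivative_transform_within_open[where S="{r. r \<noteq> c}"])
       (use Suc in \<open>auto simp: open_Collect_neq\<close>)
  moreover have "dR g (R, \<theta>) = vector_derivative (\<lambda>r. g (r, \<theta>)) (at R)" for g
    by (simp add: dR_def)
  ultimately show ?case by (simp add: vector_derivative_at)
qed

lemma dTheta_iterate_trig_series:
  assumes "finite {n. \<phi> n R \<noteq> 0}" and "\<And>t. f (R, t) = trig_series a \<phi> (R, t)"
  shows "(dTheta ^^ j) f (R, \<theta>) = trig_series (\<lambda>n. (\<i> * of_int n) ^ j * a n) \<phi> (R, \<theta>)"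
proof (induction j arbitrary: \<theta>)
  case 0
  then show ?case using assms(2) by simp
next
  case (Suc j)
  have "((\<lambda>t. (dTheta ^^ j) f (R, t)) has_vector_derivative
      trig_series (\<lambda>n. \<i> * of_int n * ((\<i> * of_int n) ^ j * a n)) \<phi> (R, \<theta>)) (at \<theta>)"
    unfolding Suc.IH by (rule trig_series_has_vector_derivative_theta[of \<phi> R, OF assms(1)])
  moreover have "dTheta g (R, \<theta>) = vector_derivative (\<lambda>t. g (R, t)) (at \<theta>)" for g
    by (simp add: dTheta_def)
  ultimately show ?case by (simp add: vector_derivative_at mult.assoc)
qed

lemma weighted_derivative_cutoff_series:
  assumes "\<And>m x. (deriv ^^ m) chi differentiable (at x)"
    and "\<And>s. \<bar>s\<bar> > 1 \<Longrightarrow> chi s = 0" and "R \<noteq> c"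
  shows "of_real (rho R ^ p) * (dTheta ^^ j) ((dR ^^ m) (trig_series a (cutoff_profile chi c 0))) (R, \<theta>) =
         trig_series (\<lambda>n. (\<i> * of_int n) ^ j * a n) (\<lambda>n r. rho r ^ p * cutoff_profile chi c m n r) (R, \<theta>)"
proof -
  have "(dTheta ^^ j) ((dR ^^ m) (trig_series a (cutoff_profile chi c 0))) (R, \<theta>) =
      trig_series (\<lambda>n. (\<i> * of_int n) ^ j * a n) (cutoff_profile chi c m) (R, \<theta>)"
    by (intro dTheta_iterate_trig_series finite_cutoff_profile_support dR_iterate_cutoff_series assms)
  then show ?thesis
    using trig_series_mult_of_real[of "\<lambda>r. rho r ^ p" R _ "cutoff_profile chi c m" \<theta>] by simp
qed

lemma exp_ii_int_has_integral:
  "((\<lambda>\<theta>::real. exp (\<i> * of_int k * of_real \<theta>)) has_integral (if k = 0 then 2 * pi else 0)) {0..2*pi}"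
proof (cases "k = 0")
  case True
  then show ?thesis
    using has_integral_const_real[of "1::complex" 0 "2*pi"] by (simp add: scaleR_conv_of_real)
next
  case False
  define F where "F \<theta> = exp (\<i> * of_int k * of_real \<theta>) / (\<i> * of_int k)" for \<theta> :: real
  have "((\<lambda>\<theta>::real. exp (\<i> * of_int k * of_real \<theta>)) has_integral (F (2*pi) - F 0)) {0..2*pi}"
  proof (rule fundamental_theorem_of_calculus)
    fix x :: real
    have "((\<lambda>z. exp (\<i> * of_int k * z) / (\<i> * of_int k)) has_field_derivative
        exp (\<i> * of_int k * of_real x)) (at (of_real x))"
      using False by (auto intro!: derivative_eq_intros)
    from has_vector_derivative_real_field[OF this]
    show "(F has_vector_derivative exp (\<i> * of_int k * of_real x)) (at x within {0..2*pi})"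
      unfolding F_def by (rule has_vector_derivative_at_within)
  qed simp
  moreover have "exp (\<i> * of_int k * of_real (2*pi)) = 1"
    using exp_integer_2pi[of "of_int k"] by (simp add: ac_simps)
  ultimately show ?thesis using False by (simp add: F_def)
qed

lemma trig_poly_norm_sq_has_integral:
  assumes "finite S"
  shows "((\<lambda>\<theta>. (cmod (\<Sum>n\<in>S. c n * exp (\<i> * of_int n * of_real \<theta>)))\<^sup>2) has_integral
           2 * pi * (\<Sum>n\<in>S. (cmod (c n))\<^sup>2)) {0..2*pi}"
proof -
  define h where "h \<theta> = (\<Sum>n\<in>S. c n * exp (\<i> * of_int n * of_real \<theta>))" for \<theta> :: real
  have expand: "complex_of_real ((cmod (h \<theta>))\<^sup>2) =
      (\<Sum>n\<in>S. \<Sum>m\<in>S. c n * cnj (c m) * exp (\<i> * of_int (n - m) * of_real \<theta>))" for \<theta>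
  proof -
    have cnj_exp: "cnj (exp (\<i> * of_int m * of_real \<theta>)) = exp (- (\<i> * of_int m * of_real \<theta>))" for m
      by (subst exp_cnj) simp
    have "complex_of_real ((cmod (h \<theta>))\<^sup>2) = h \<theta> * cnj (h \<theta>)"
      by (rule complex_norm_square)
    also have "\<dots> = (\<Sum>n\<in>S. \<Sum>m\<in>S. (c n * exp (\<i> * of_int n * of_real \<theta>)) *
        cnj (c m * exp (\<i> * of_int m * of_real \<theta>)))"
      unfolding h_def by (simp add: sum_product cnj_sum)
    also have "\<dots> = (\<Sum>n\<in>S. \<Sum>m\<in>S. c n * cnj (c m) * exp (\<i> * of_int (n - m) * of_real \<theta>))"
      by (intro sum.cong refl, unfold complex_cnj_mult cnj_exp)
         (simp add: exp_add[symmetric] algebra_simps)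
    finally show ?thesis .
  qed
  have "((\<lambda>\<theta>. \<Sum>n\<in>S. \<Sum>m\<in>S. c n * cnj (c m) * exp (\<i> * of_int (n - m) * of_real \<theta>)) has_integral
      (\<Sum>n\<in>S. \<Sum>m\<in>S. c n * cnj (c m) * (if n - m = 0 then 2 * pi else 0))) {0..2*pi}"
    by (intro has_integral_sum assms has_integral_mult_right exp_ii_int_has_integral)
  also have "(\<Sum>n\<in>S. \<Sum>m\<in>S. c n * cnj (c m) * (if n - m = 0 then 2 * pi else 0)) =
      (\<Sum>n\<in>S. 2 * pi * (c n * cnj (c n)))"
  proof (intro sum.cong refl)
    fix n assume "n \<in> S"
    have "(\<Sum>m\<in>S. c n * cnj (c m) * (if n - m = 0 then 2 * pi else 0)) =
        (\<Sum>m\<in>S. if n = m then 2 * pi * (c n * cnj (c m)) else 0)"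
      by (intro sum.cong) auto
    then show "(\<Sum>m\<in>S. c n * cnj (c m) * (if n - m = 0 then 2 * pi else 0)) =
        2 * pi * (c n * cnj (c n))"
      using assms \<open>n \<in> S\<close> by simp
  qed
  also have "\<dots> = complex_of_real (2 * pi * (\<Sum>n\<in>S. (cmod (c n))\<^sup>2))"
    by (simp add: sum_distrib_left flip: complex_norm_square)
  finally have "((\<lambda>\<theta>. complex_of_real ((cmod (h \<theta>))\<^sup>2)) has_integral
      complex_of_real (2 * pi * (\<Sum>n\<in>S. (cmod (c n))\<^sup>2))) {0..2*pi}"
    unfolding expand .
  from has_integral_Re[OF this] show ?thesis
    by (simp add: h_def)
qed

lemma nn_integral_trig_poly_norm_sq:
  assumes "finite S"
  shows "(\<integral>\<^sup>+\<theta>\<in>{0..<2*pi}. ennreal ((cmod (\<Sum>n\<in>S. c n * exp (\<i> * of_int n * of_real \<theta>)))\<^sup>2) \<partial>lborel) =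
         ennreal (2 * pi * (\<Sum>n\<in>S. (cmod (c n))\<^sup>2))"
proof (rule nn_integral_has_integral_lebesgue')
  show "((\<lambda>\<theta>. (cmod (\<Sum>n\<in>S. c n * exp (\<i> * of_int n * of_real \<theta>)))\<^sup>2) has_integral
      2 * pi * (\<Sum>n\<in>S. (cmod (c n))\<^sup>2)) {0..<2*pi}"
    using trig_poly_norm_sq_has_integral[OF assms, of c]
    by (subst has_integral_spike_set_eq[where T="{0..2*pi}"])
       (auto intro: negligible_subset[of "{2*pi}"])
qed simp

lemma nn_integral_count_space_eq_infsum:
  fixes w :: "'a \<Rightarrow> real"
  assumes "\<And>n. 0 \<le> w n" and "w summable_on UNIV"
  shows "(\<integral>\<^sup>+n. ennreal (w n) \<partial>count_space UNIV) = ennreal (\<Sum>\<^sub>\<infinity>n. w n)"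
proof -
  have "Infinite_Set_Sum.abs_summable_on w UNIV"
    using assms(2) abs_summable_equivalent summable_on_iff_abs_summable_on_real by blast
  then show ?thesis
    using assms(1) nn_integral_conv_infsetsum infsetsum_infsum by metis
qed

lemma nn_integral_trig_series_circle:
  assumes "finite {n. \<phi> n R \<noteq> 0}"
  shows "(\<integral>\<^sup>+\<theta>\<in>{0..<2*pi}. ennreal ((cmod (trig_series a \<phi> (R, \<theta>)))\<^sup>2) \<partial>lborel) =
         (\<integral>\<^sup>+n. ennreal (2 * pi * (cmod (a n))\<^sup>2 * (\<phi> n R)\<^sup>2) \<partial>count_space UNIV)"
proof -
  let ?S = "{n. \<phi> n R \<noteq> 0}"
  have "trig_series a \<phi> (R, \<theta>) =
      (\<Sum>n\<in>?S. (a n * of_real (\<phi> n R)) * exp (\<i> * of_int n * of_real \<theta>))" for \<theta>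
    by (subst trig_series_eq_sum[OF assms]) (auto simp: ac_simps)
  then have "(\<integral>\<^sup>+\<theta>\<in>{0..<2*pi}. ennreal ((cmod (trig_series a \<phi> (R, \<theta>)))\<^sup>2) \<partial>lborel) =
      ennreal (2 * pi * (\<Sum>n\<in>?S. (cmod (a n * of_real (\<phi> n R)))\<^sup>2))"
    by (simp only: nn_integral_trig_poly_norm_sq[OF assms])
  also have "\<dots> = ennreal (\<Sum>n\<in>?S. 2 * pi * (cmod (a n))\<^sup>2 * (\<phi> n R)\<^sup>2)"
    by (simp add: sum_distrib_left norm_mult power_mult_distrib mult.assoc)
  also have "\<dots> = (\<Sum>n\<in>?S. ennreal (2 * pi * (cmod (a n))\<^sup>2 * (\<phi> n R)\<^sup>2))"
    by (rule sum_ennreal[symmetric]) simp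
  also have "\<dots> = (\<integral>\<^sup>+n. ennreal (2 * pi * (cmod (a n))\<^sup>2 * (\<phi> n R)\<^sup>2) \<partial>count_space UNIV)"
    by (rule nn_integral_count_space'[symmetric]) (use assms in auto)
  finally show ?thesis .
qed

lemma borel_measurable_trig_series_Omega:
  assumes meas: "\<And>n. \<phi> n \<in> borel_measurable borel"
    and fin: "\<And>R. R \<in> {1<..<7} \<Longrightarrow> finite {n. \<phi> n R \<noteq> 0}"
  shows "(\<lambda>x. indicator Omega x * (cmod (trig_series a \<phi> x))\<^sup>2) \<in> borel_measurable (borel \<Otimes>\<^sub>M borel)"
proof (rule borel_measurable_LIMSEQ_real)
  define T where "T i x = (\<Sum>n\<in>{-int i..int i}.
      a n * exp (\<i> * of_int n * of_real (snd x)) * of_real (\<phi> n (fst x)))" for i x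
  have "Omega \<in> sets (borel \<Otimes>\<^sub>M borel)"
    unfolding Omega_def by (intro pair_measureI) auto
  then show "(\<lambda>x. indicator Omega x * (cmod (T i x))\<^sup>2) \<in> borel_measurable (borel \<Otimes>\<^sub>M borel)" for i
    unfolding T_def using meas by measurable
  show "(\<lambda>i. indicator Omega x * (cmod (T i x))\<^sup>2) \<longlonglongrightarrow> indicator Omega x * (cmod (trig_series a \<phi> x))\<^sup>2"
    for x
  proof (cases "x \<in> Omega")
    case True
    obtain R \<theta> where x: "x = (R, \<theta>)" by fastforce
    then have "finite {n. \<phi> n R \<noteq> 0}" using True fin by (simp add: Omega_def)
    then obtain N where N: "\<And>n. \<phi> n R \<noteq> 0 \<Longrightarrow> \<bar>n\<bar> \<le> N"
      using bdd_above_finite[of "abs ` {n. \<phi> n R \<noteq> 0}"] by (auto simp: bdd_above_def)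
    have "T i x = trig_series a \<phi> x" if "nat N \<le> i" for i
    proof -
      have "\<phi> n R = 0" if "n \<notin> {-int i..int i}" for n
        using N[of n] that \<open>nat N \<le> i\<close> by fastforce
      from trig_series_eq_sum[of "{-int i..int i}" \<phi> R, OF finite_atLeastAtMost_int this] show ?thesis
        unfolding x T_def by simp
    qed
    then show ?thesis
      by (intro tendsto_eventually eventually_sequentiallyI[of "nat N"]) auto
  qed simp
qed

lemma nn_integral_Omega_trig_series:
  assumes meas: "\<And>n. \<phi> n \<in> borel_measurable borel"
    and fin: "\<And>R. R \<in> {1<..<7} \<Longrightarrow> finite {n. \<phi> n R \<noteq> 0}"
  shows "(\<integral>\<^sup>+x\<in>Omega. ennreal ((cmod (trig_series a \<phi> x))\<^sup>2) \<partial>lborel) =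
         (\<integral>\<^sup>+n. ennreal (2 * pi * (cmod (a n))\<^sup>2) * (\<integral>\<^sup>+R\<in>{1<..<7}. ennreal ((\<phi> n R)\<^sup>2) \<partial>lborel)
            \<partial>count_space UNIV)"
proof -
  define G where "G x = indicator Omega x * (cmod (trig_series a \<phi> x))\<^sup>2" for x
  have "G \<in> borel_measurable (borel \<Otimes>\<^sub>M borel)"
    unfolding G_def by (rule borel_measurable_trig_series_Omega[OF meas fin])
  then have G: "G \<in> borel_measurable (lborel \<Otimes>\<^sub>M lborel)"
    by (subst measurable_cong_sets[OF sets_pair_measure_cong[OF sets_lborel sets_lborel] refl])
  have circle: "(\<integral>\<^sup>+\<theta>. ennreal (G (R, \<theta>)) \<partial>lborel) =
      (\<integral>\<^sup>+n. ennreal (2 * pi * (cmod (a n))\<^sup>2 * (\<phi> n R)\<^sup>2) * indicator {1<..<7} R \<partial>count_space UNIV)"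
    for R
  proof (cases "R \<in> {1<..<7}")
    case True
    have "ennreal (G (R, \<theta>)) = ennreal ((cmod (trig_series a \<phi> (R, \<theta>)))\<^sup>2) * indicator {0..<2*pi} \<theta>"
      for \<theta>
      using True by (simp add: G_def Omega_def indicator_def)
    then show ?thesis
      using nn_integral_trig_series_circle[of \<phi> R, OF fin[OF True]] True by simp
  next
    case False
    then have "G (R, \<theta>) = 0" for \<theta> by (auto simp: G_def Omega_def indicator_def)
    then show ?thesis using False by simp
  qed
  have "(\<integral>\<^sup>+x\<in>Omega. ennreal ((cmod (trig_series a \<phi> x))\<^sup>2) \<partial>lborel) = (\<integral>\<^sup>+x. ennreal (G x) \<partial>lborel)"
    by (intro nn_integral_cong) (simp add: G_def indicator_def)
  also have "\<dots> = (\<integral>\<^sup>+x. ennreal (G x) \<partial>(lborel \<Otimes>\<^sub>M lborel))"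
    by (simp only: lborel_prod)
  also have "\<dots> = (\<integral>\<^sup>+R. \<integral>\<^sup>+\<theta>. ennreal (G (R, \<theta>)) \<partial>lborel \<partial>lborel)"
    by (rule lborel.nn_integral_fst[symmetric]) (use G in measurable)
  also have "\<dots> = (\<integral>\<^sup>+R. \<integral>\<^sup>+n. ennreal (2 * pi * (cmod (a n))\<^sup>2 * (\<phi> n R)\<^sup>2) * indicator {1<..<7} R
      \<partial>count_space UNIV \<partial>lborel)"
    by (simp only: circle)
  also have "\<dots> = (\<integral>\<^sup>+n. \<integral>\<^sup>+R. ennreal (2 * pi * (cmod (a n))\<^sup>2 * (\<phi> n R)\<^sup>2) * indicator {1<..<7} R
      \<partial>lborel \<partial>count_space UNIV)"
    by (rule nn_integral_count_space_nn_integral) (use meas in measurable)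
  also have "\<dots> = (\<integral>\<^sup>+n. ennreal (2 * pi * (cmod (a n))\<^sup>2) * (\<integral>\<^sup>+R\<in>{1<..<7}. ennreal ((\<phi> n R)\<^sup>2) \<partial>lborel)
      \<partial>count_space UNIV)"
  proof (intro nn_integral_cong)
    fix n
    have "(\<integral>\<^sup>+R. ennreal (2 * pi * (cmod (a n))\<^sup>2 * (\<phi> n R)\<^sup>2) * indicator {1<..<7} R \<partial>lborel) =
        (\<integral>\<^sup>+R. ennreal (2 * pi * (cmod (a n))\<^sup>2) * (ennreal ((\<phi> n R)\<^sup>2) * indicator {1<..<7} R) \<partial>lborel)"
      by (intro nn_integral_cong) (simp add: ennreal_mult mult.assoc)
    also have "\<dots> = ennreal (2 * pi * (cmod (a n))\<^sup>2) * (\<integral>\<^sup>+R\<in>{1<..<7}. ennreal ((\<phi> n R)\<^sup>2) \<partial>lborel)"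
      by (rule nn_integral_cmult) (use meas in measurable)
    finally show "(\<integral>\<^sup>+R. ennreal (2 * pi * (cmod (a n))\<^sup>2 * (\<phi> n R)\<^sup>2) * indicator {1<..<7} R \<partial>lborel) =
        ennreal (2 * pi * (cmod (a n))\<^sup>2) * (\<integral>\<^sup>+R\<in>{1<..<7}. ennreal ((\<phi> n R)\<^sup>2) \<partial>lborel)" .
  qed
  finally show ?thesis .
qed

lemma rho_le_dist_boundary:
  assumes "R \<in> {1<..<7}" and "c = 1 \<or> c = 7"
  shows "0 \<le> rho R" and "rho R \<le> \<bar>R - c\<bar>"
proof -
  have "(R - 1) * (7 - R) \<le> (R - 1) * 6" "(R - 1) * (7 - R) \<le> 6 * (7 - R)"
    using assms(1) by (intro mult_left_mono mult_right_mono; simp)+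
  then show "rho R \<le> \<bar>R - c\<bar>"
    using assms by (auto simp: rho_def)
  show "0 \<le> rho R"
    using assms(1) by (simp add: rho_def)
qed

lemma one_plus_abs_powr_le:
  fixes x s :: real
  assumes "0 \<le> s"
  shows "(1 + \<bar>x\<bar>) powr (2 * s) \<le> 2 powr s * (1 + x\<^sup>2) powr s"
proof -
  have "(1 + \<bar>x\<bar>)\<^sup>2 \<le> 2 * (1 + x\<^sup>2)"
    using sum_squares_bound[of 1 "\<bar>x\<bar>"] by (simp add: power2_eq_square algebra_simps)
  have "(1 + \<bar>x\<bar>) powr (2 * s) = ((1 + \<bar>x\<bar>)\<^sup>2) powr s"
    by (simp add: powr_powr flip: powr_numeral)
  also have "\<dots> \<le> (2 * (1 + x\<^sup>2)) powr s"
    using powr_mono2[OF assms] \<open>(1 + \<bar>x\<bar>)\<^sup>2 \<le> 2 * (1 + x\<^sup>2)\<close> by simp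
  also have "\<dots> = 2 powr s * (1 + x\<^sup>2) powr s"
    using powr_mult[of 2 "1 + x\<^sup>2" s] by simp
  finally show ?thesis .
qed

(* The profile vanishes unless |R - c| <= 1/(1 + |n|), and there rho R <= |R - c|. *)
lemma nn_integral_rho_cutoff_profile_le:
  assumes zero: "\<And>s. \<bar>s\<bar> > 1 \<Longrightarrow> chi s = 0" and M: "\<And>s. \<bar>(deriv ^^ m) chi s\<bar> \<le> M"
    and c: "c = 1 \<or> c = 7"
  shows "(\<integral>\<^sup>+R\<in>{1<..<7}. ennreal ((rho R ^ p * cutoff_profile chi c m n R)\<^sup>2) \<partial>lborel)
           \<le> ennreal (2 * M\<^sup>2 * (1 + \<bar>real_of_int n\<bar>) powr (2 * real m - 2 * real p - 1))"
proof -
  define K where "K = 1 + \<bar>real_of_int n\<bar>"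
  have K: "1 \<le> K" by (simp add: K_def)
  define B where "B = M\<^sup>2 * K ^ (2 * m) * (1 / K) ^ (2 * p)"
  have pointwise: "ennreal ((rho R ^ p * cutoff_profile chi c m n R)\<^sup>2) * indicator {1<..<7} R
      \<le> ennreal B * indicator {c - 1/K..c + 1/K} R" for R
  proof (cases "R \<in> {1<..<7} \<and> cutoff_profile chi c m n R \<noteq> 0")
    case False
    then show ?thesis by (auto simp: indicator_def)
  next
    case True
    then have R: "R \<in> {1<..<7}" and "\<not> 1 < K * \<bar>R - c\<bar>"
      using cutoff_profile_eq_0[of chi n R c m, OF zero] by (auto simp: K_def)
    then have near: "\<bar>R - c\<bar> \<le> 1 / K" using K by (simp add: field_simps)
    have "0 \<le> rho R" "rho R \<le> 1 / K"
      using rho_le_dist_boundary[OF R c] near by auto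
    then have "(rho R ^ p)\<^sup>2 \<le> ((1 / K) ^ p)\<^sup>2"
      by (intro power_mono) auto
    moreover have "(cutoff_profile chi c m n R)\<^sup>2 \<le> (K ^ m * M)\<^sup>2"
    proof -
      have "\<bar>cutoff_profile chi c m n R\<bar> \<le> K ^ m * M"
        using M[of "K * (R - c)"] K
        by (auto simp: cutoff_profile_def K_def abs_mult intro!: mult_left_mono)
      from power_mono[OF this abs_ge_zero, of 2] show ?thesis by simp
    qed
    ultimately have "(rho R ^ p)\<^sup>2 * (cutoff_profile chi c m n R)\<^sup>2 \<le> ((1 / K) ^ p)\<^sup>2 * (K ^ m * M)\<^sup>2"
      by (intro mult_mono) auto
    then have "(rho R ^ p * cutoff_profile chi c m n R)\<^sup>2 \<le> B"
      by (simp add: B_def power_mult_distrib power_mult[symmetric] mult_ac)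
    then show ?thesis using R near by (auto simp: indicator_def intro: ennreal_leI)
  qed
  have "(\<integral>\<^sup>+R\<in>{1<..<7}. ennreal ((rho R ^ p * cutoff_profile chi c m n R)\<^sup>2) \<partial>lborel)
      \<le> (\<integral>\<^sup>+R. ennreal B * indicator {c - 1/K..c + 1/K} R \<partial>lborel)"
    by (intro nn_integral_mono pointwise)
  also have "\<dots> = ennreal B * ennreal (2 / K)"
    using K by (simp add: nn_integral_cmult_indicator)
  also have "\<dots> = ennreal (B * (2 / K))"
    by (rule ennreal_mult[symmetric]) (use K in \<open>auto simp: B_def\<close>)
  also have "B * (2 / K) = 2 * M\<^sup>2 * K powr (2 * real m - 2 * real p - 1)"
  proof -
    have "K powr (2 * real m - 2 * real p - 1) = K powr real (2 * m) / K powr real (2 * p) / K powr 1"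
      using K by (simp add: powr_diff)
    also have "\<dots> = K ^ (2 * m) / K ^ (2 * p) / K"
      using K by (simp only: powr_realpow powr_one)
    finally show ?thesis by (simp add: B_def power_one_over)
  qed
  finally show ?thesis by (simp add: K_def)
qed

lemma L2norm_cong:
  assumes "\<And>x. x \<in> Omega \<Longrightarrow> f x = g x"
  shows "L2norm f = L2norm g"
proof -
  have "(\<integral>\<^sup>+x\<in>Omega. ennreal ((cmod (f x))\<^sup>2) \<partial>lborel) = (\<integral>\<^sup>+x\<in>Omega. ennreal ((cmod (g x))\<^sup>2) \<partial>lborel)"
    using assms by (intro nn_integral_cong) (auto simp: indicator_def)
  then show ?thesis by (simp only: L2norm_def)
qed

lemma L2norm_le_sqrt:
  assumes "(\<integral>\<^sup>+x\<in>Omega. ennreal ((cmod (f x))\<^sup>2) \<partial>lborel) \<le> ennreal X" and "0 \<le> X"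
  shows "L2norm f \<le> ennreal (sqrt X)"
proof -
  let ?I = "\<integral>\<^sup>+x\<in>Omega. ennreal ((cmod (f x))\<^sup>2) \<partial>lborel"
  have "?I \<noteq> \<infinity>" using assms(1) by (auto simp: top_unique)
  moreover have "enn2real ?I \<le> X"
    using enn2real_mono[OF assms(1)] assms(2) by simp
  ultimately show ?thesis
    unfolding L2norm_def Let_def by (simp add: ennreal_leI)
qed

lemma mode_weight_le:
  fixes s :: real and n :: int and j m p :: nat
  assumes "0 \<le> s" and "2 * real (j + m) - 2 * real p - 1 \<le> 2 * s"
  shows "\<bar>real_of_int n\<bar> ^ (2 * j) * (1 + \<bar>real_of_int n\<bar>) powr (2 * real m - 2 * real p - 1)
           \<le> 2 powr s * (1 + (real_of_int n)\<^sup>2) powr s"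
proof -
  define K where "K = 1 + \<bar>real_of_int n\<bar>"
  have K: "1 \<le> K" by (simp add: K_def)
  have "\<bar>real_of_int n\<bar> ^ (2 * j) * K powr (2 * real m - 2 * real p - 1)
      \<le> K powr real (2 * j) * K powr (2 * real m - 2 * real p - 1)"
  proof (rule mult_right_mono)
    have "\<bar>real_of_int n\<bar> ^ (2 * j) \<le> K ^ (2 * j)"
      by (rule power_mono) (auto simp: K_def)
    then show "\<bar>real_of_int n\<bar> ^ (2 * j) \<le> K powr real (2 * j)"
      using powr_realpow[of K "2 * j"] K by simp
  qed simp
  also have "\<dots> = K powr (2 * real (j + m) - 2 * real p - 1)"
    by (simp add: powr_add[symmetric] algebra_simps)
  also have "\<dots> \<le> K powr (2 * s)"
    using K assms(2) by (intro powr_mono) auto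
  also have "\<dots> \<le> 2 powr s * (1 + (real_of_int n)\<^sup>2) powr s"
    unfolding K_def by (rule one_plus_abs_powr_le[OF assms(1)])
  finally show ?thesis by (simp add: K_def)
qed

lemma mode_energy_le:
  assumes zero: "\<And>s. \<bar>s\<bar> > 1 \<Longrightarrow> chi s = 0" and M: "\<And>s. \<bar>(deriv ^^ m) chi s\<bar> \<le> M"
    and c: "c = 1 \<or> c = 7"
    and s: "0 \<le> s" "2 * real (j + m) - 2 * real p - 1 \<le> 2 * s"
  shows "ennreal (2 * pi * (cmod ((\<i> * of_int n) ^ j * z))\<^sup>2) *
      (\<integral>\<^sup>+R\<in>{1<..<7}. ennreal ((rho R ^ p * cutoff_profile chi c m n R)\<^sup>2) \<partial>lborel)
    \<le> ennreal (2 * pi * (2 * M\<^sup>2 * 2 powr s) * ((1 + (real_of_int n)\<^sup>2) powr s * (cmod z)\<^sup>2))"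
proof -
  define E where "E = 2 * real m - 2 * real p - 1"
  have "ennreal (2 * pi * (cmod ((\<i> * of_int n) ^ j * z))\<^sup>2) *
      (\<integral>\<^sup>+R\<in>{1<..<7}. ennreal ((rho R ^ p * cutoff_profile chi c m n R)\<^sup>2) \<partial>lborel)
    \<le> ennreal (2 * pi * (\<bar>real_of_int n\<bar> ^ (2 * j) * (cmod z)\<^sup>2)) *
      ennreal (2 * M\<^sup>2 * (1 + \<bar>real_of_int n\<bar>) powr E)"
    unfolding E_def
    by (intro mult_mono nn_integral_rho_cutoff_profile_le[OF zero M c])
       (simp_all add: norm_mult norm_power power_mult_distrib power_mult[symmetric] mult.commute)
  also have "\<dots> = ennreal (2 * pi * (2 * M\<^sup>2 * (cmod z)\<^sup>2) *
      (\<bar>real_of_int n\<bar> ^ (2 * j) * (1 + \<bar>real_of_int n\<bar>) powr E))"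
    by (simp add: ennreal_mult[symmetric] mult_ac)
  also have "\<dots> \<le> ennreal (2 * pi * (2 * M\<^sup>2 * (cmod z)\<^sup>2) *
      (2 powr s * (1 + (real_of_int n)\<^sup>2) powr s))"
    unfolding E_def by (intro ennreal_leI mult_left_mono mode_weight_le s) simp
  also have "\<dots> = ennreal (2 * pi * (2 * M\<^sup>2 * 2 powr s) * ((1 + (real_of_int n)\<^sup>2) powr s * (cmod z)\<^sup>2))"
    by (simp add: mult_ac)
  finally show ?thesis .
qed

lemma L2norm_weighted_derivative_cutoff_series_le:
  fixes chi :: "real \<Rightarrow> real" and c s :: real and j m p :: nat
  assumes smooth: "\<And>m x. (deriv ^^ m) chi differentiable (at x)"
    and zero: "\<And>s. \<bar>s\<bar> > 1 \<Longrightarrow> chi s = 0"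
    and c: "c = 1 \<or> c = 7"
    and s: "0 \<le> s" "2 * real (j + m) - 2 * real p - 1 \<le> 2 * s"
  obtains C where "0 \<le> C"
    and "\<And>b. in_Hs s b \<Longrightarrow>
      L2norm (\<lambda>x. of_real (rho (fst x) ^ p) *
        (dTheta ^^ j) ((dR ^^ m) (trig_series (fcoeff b) (cutoff_profile chi c 0))) x)
      \<le> ennreal (C * Hs_norm s b)"
proof -
  have "continuous_on UNIV ((deriv ^^ m) chi)"
    using smooth by (meson continuous_at_imp_continuous_on differentiable_imp_continuous_within)
  from bounded_vanishing_outside_interval[OF this deriv_iterate_eq_0_outside_interval[OF zero]]
  obtain M where M: "\<And>x. \<bar>(deriv ^^ m) chi x\<bar> \<le> M" by blast
  define A where "A = 2 * pi * (2 * M\<^sup>2 * 2 powr s)"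
  define \<phi> where "\<phi> = (\<lambda>n R. rho R ^ p * cutoff_profile chi c m n R)"
  have meas: "\<phi> n \<in> borel_measurable borel" for n
    using borel_measurable_cutoff_profile[OF smooth] unfolding \<phi>_def rho_def by measurable
  have fin: "finite {n. \<phi> n R \<noteq> 0}" if "R \<in> {1<..<7}" for R
    using finite_cutoff_profile_support[of chi R c m, OF zero] that c
    by (auto simp: \<phi>_def intro: finite_subset)
  show ?thesis
  proof
    show "0 \<le> sqrt A" by (simp add: A_def)
  next
    fix b assume b: "in_Hs s b"
    define w where "w = (\<lambda>n. (1 + (real_of_int n)\<^sup>2) powr s * (cmod (fcoeff b n))\<^sup>2)"
    have w: "\<And>n. 0 \<le> w n" "w summable_on UNIV"
      using b by (auto simp: w_def in_Hs_def)
    define a where "a = (\<lambda>n. (\<i> * of_int n) ^ j * fcoeff b n)"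
    let ?f = "trig_series (fcoeff b) (cutoff_profile chi c 0)"
    have on_Omega: "of_real (rho (fst x) ^ p) * (dTheta ^^ j) ((dR ^^ m) ?f) x = trig_series a \<phi> x"
      if "x \<in> Omega" for x
      using that c weighted_derivative_cutoff_series[OF smooth zero, of "fst x" c p j m "fcoeff b" "snd x"]
      by (auto simp: Omega_def a_def \<phi>_def)
    have "(\<integral>\<^sup>+x\<in>Omega. ennreal ((cmod (trig_series a \<phi> x))\<^sup>2) \<partial>lborel) =
        (\<integral>\<^sup>+n. ennreal (2 * pi * (cmod (a n))\<^sup>2) * (\<integral>\<^sup>+R\<in>{1<..<7}. ennreal ((\<phi> n R)\<^sup>2) \<partial>lborel)
          \<partial>count_space UNIV)"
      by (rule nn_integral_Omega_trig_series[OF meas fin])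
    also have "\<dots> \<le> (\<integral>\<^sup>+n. ennreal (A * w n) \<partial>count_space UNIV)"
      unfolding a_def w_def A_def \<phi>_def by (intro nn_integral_mono mode_energy_le[OF zero M c s])
    also have "\<dots> = ennreal (A * (\<Sum>\<^sub>\<infinity>n. w n))"
      using nn_integral_count_space_eq_infsum[of "\<lambda>n. A * w n"] w
      by (simp add: A_def summable_on_cmult_right infsum_cmult_right')
    finally have "L2norm (trig_series a \<phi>) \<le> ennreal (sqrt (A * (\<Sum>\<^sub>\<infinity>n. w n)))"
      by (rule L2norm_le_sqrt) (use w in \<open>simp add: A_def infsum_nonneg\<close>)
    then show "L2norm (\<lambda>x. of_real (rho (fst x) ^ p) * (dTheta ^^ j) ((dR ^^ m) ?f) x)
        \<le> ennreal (sqrt A * Hs_norm s b)"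
      using L2norm_cong[OF on_Omega] by (simp add: Hs_norm_def w_def real_sqrt_mult)
  qed
qed

lemma Hs_norm_nonneg: "0 \<le> Hs_norm s b"
  by (simp add: Hs_norm_def infsum_nonneg)

lemma cutoff_series_estimate:
  fixes chi :: "real \<Rightarrow> real" and c :: real and j1 j2 l k :: nat
  assumes smooth: "\<And>m x. (deriv ^^ m) chi differentiable (at x)"
    and zero: "\<And>s. \<bar>s\<bar> > 1 \<Longrightarrow> chi s = 0"
    and c: "c = 1 \<or> c = 7"
    and jk: "int j1 + int j2 - int k \<ge> 1"
  defines "s \<equiv> real j1 + real j2 - real k - 1/2"
  shows "\<exists>C. \<forall>b. in_Hs s b \<longrightarrow>
      L2norm (trig_series (fcoeff b) (cutoff_profile chi c 0))
      + L2norm (\<lambda>x. of_real (rho (fst x) ^ (k + l)) *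
          (dTheta ^^ j1) ((dR ^^ (j2 + l)) (trig_series (fcoeff b) (cutoff_profile chi c 0))) x)
      \<le> ennreal (C * Hs_norm s b)"
proof -
  have s: "0 \<le> s" using jk by (simp add: s_def)
  obtain C0 where C0: "0 \<le> C0"
    "\<And>b. in_Hs s b \<Longrightarrow> L2norm (trig_series (fcoeff b) (cutoff_profile chi c 0)) \<le> ennreal (C0 * Hs_norm s b)"
    using L2norm_weighted_derivative_cutoff_series_le[OF smooth zero c s, of 0 0 0] s by (simp, blast)
  have "2 * real (j1 + (j2 + l)) - 2 * real (k + l) - 1 \<le> 2 * s"
    by (simp add: s_def)
  from L2norm_weighted_derivative_cutoff_series_le[OF smooth zero c s this]
  obtain C1 where C1: "0 \<le> C1"
    "\<And>b. in_Hs s b \<Longrightarrow> L2norm (\<lambda>x. of_real (rho (fst x) ^ (k + l)) *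
        (dTheta ^^ j1) ((dR ^^ (j2 + l)) (trig_series (fcoeff b) (cutoff_profile chi c 0))) x)
      \<le> ennreal (C1 * Hs_norm s b)"
    by blast
  show ?thesis
  proof (intro exI allI impI)
    fix b assume b: "in_Hs s b"
    have "L2norm (trig_series (fcoeff b) (cutoff_profile chi c 0))
        + L2norm (\<lambda>x. of_real (rho (fst x) ^ (k + l)) *
          (dTheta ^^ j1) ((dR ^^ (j2 + l)) (trig_series (fcoeff b) (cutoff_profile chi c 0))) x)
        \<le> ennreal (C0 * Hs_norm s b) + ennreal (C1 * Hs_norm s b)"
      by (rule add_mono[OF C0(2)[OF b] C1(2)[OF b]])
    also have "\<dots> = ennreal ((C0 + C1) * Hs_norm s b)"
      using C0(1) C1(1) Hs_norm_nonneg[of s b] by (simp add: distrib_right)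
    finally show "L2norm (trig_series (fcoeff b) (cutoff_profile chi c 0))
        + L2norm (\<lambda>x. of_real (rho (fst x) ^ (k + l)) *
          (dTheta ^^ j1) ((dR ^^ (j2 + l)) (trig_series (fcoeff b) (cutoff_profile chi c 0))) x)
        \<le> ennreal ((C0 + C1) * Hs_norm s b)" .
  qed
qed

theorem lemma4p1:
  fixes chi :: "real \<Rightarrow> real" and j1 j2 l k :: nat
  assumes smooth: "\<And>m x. ((deriv ^^ m) chi) differentiable (at x)"
    and even: "\<And>s. chi (- s) = chi s"
    and one: "\<And>s. \<bar>s\<bar> < 1/2 \<Longrightarrow> chi s = 1"
    and zero: "\<And>s. \<bar>s\<bar> > 1 \<Longrightarrow> chi s = 0"
    and jk: "int j1 + int j2 - int k \<ge> 1"
  shows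
    "(\<exists>C. \<forall>b. in_Hs (real j1 + real j2 - real k - 1/2) b \<longrightarrow>
        L2norm (bsharp chi b)
        + L2norm (\<lambda>x. of_real (rho (fst x) ^ (k + l)) * (dTheta ^^ j1) ((dR ^^ (j2 + l)) (bsharp chi b)) x)
        \<le> ennreal (C * Hs_norm (real j1 + real j2 - real k - 1/2) b))
   \<and> (\<exists>C. \<forall>B. in_Hs (real j1 + real j2 - real k - 1/2) B \<longrightarrow>
        L2norm (Bflat chi B)
        + L2norm (\<lambda>x. of_real (rho (fst x) ^ (k + l)) * (dTheta ^^ j1) ((dR ^^ (j2 + l)) (Bflat chi B)) x)
        \<le> ennreal (C * Hs_norm (real j1 + real j2 - real k - 1/2) B))"
  using cutoff_series_estimate[OF smooth zero _ jk, of 1 l] cutoff_series_estimate[OF smooth zero _ jk, of 7 l]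
  by (simp add: bsharp_eq_trig_series Bflat_eq_trig_series)

end
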